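(* Let $\mathfrak{I}=(\mathcal{I},[\mathcal{F}_1,\dots,\mathcal{F}_k],\mathcal{X},\pi,\sim,\mathcal{S})$ be a domain constrained interpretation and let $C,D,E$ be concepts. If $\mu(C,D)\neq\emptyset$ and $\mu(D,E)\neq\emptyset$, then $$\mu(C,E)=\{\sigma_{U\oplus V}\mid \sigma_U\in\mu(C,D),\ \sigma_V\in\mu(D,E)\},$$ where $U\oplus V=\{(i,k)\mid (i,j)\in U,(j,k)\in V, i\neq k\}\cup\{(i,j)\mid (i,j)\in U, j\notin \mathrm{src}(V)\}\cup\{(j,k)\mid (j,k)\in V, j\notin\mathrm{tgt}(U)\}$.
   Context: Concepts are built by the grammar $C,D::=\top\mid\bot\mid A\mid C\sqcap D\mid \exists r.C\mid N$ and natural concepts $N,N'::=A'\mid N\sqcap N'\mid N\bowtie N'\mid \exists r'.N$, where $A$ is a concept name, $A'$ a natural concept name (a distinguished infinite subset of concept names), $r$ a role name and $r'$ an intra-domain role name (a distinguished infinite subset of role names). A domain constrained interpretation is a tuple $\mathfrak{I}=(\mathcal{I},[\mathcal{F}_1,\dots,\mathcal{F}_k],\mathcal{X},\pi,\sim,\mathcal{S})$ where $\mathcal{I}=(\Delta^{\mathcal{I}},\cdot^{\mathcal{I}})$ is a classical DL interpretation, $[\mathcal{F}_1,\dots,\mathcal{F}_k]$ is a partition of a nonempty finite set $\mathcal{F}$ (of features), $\mathcal{X}\subseteq 2^{\mathcal{F}}$ with $\mathcal{F}\in\mathcal{X}$, $\pi:\Delta^{\mathcal{I}}\to 2^{\mathcal{F}}$,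 $\sim$ is an equivalence relation on $\{1,\dots,k\}$, and $\mathcal{S}=\{\sigma_{(s,t)}\mid (s,t)\in\sim\}$ with each $\sigma_{(s,t)}$ a bijection $\mathcal{F}_s\to\mathcal{F}_t$. Let $\mathcal{C}$ be the set of $G\subseteq\mathcal{F}$ with $X\not\subseteq G$ for all $X\in\mathcal{X}$, and $\mathcal{C}^i=\{G\in\mathcal{C}\mid G\subseteq\mathcal{F}_i\}$. It is required that: (1) $X\not\subseteq\pi(d)$ for all $d\in\Delta^{\mathcal{I}}$, $X\in\mathcal{X}$; (2) every $G\in\mathcal{C}$ equals $\pi(d)$ for some $d$; (3) $\sigma_{(s,t)}^{-1}=\sigma_{(t,s)}$ and $\sigma_{(t,u)}\circ\sigma_{(s,t)}=\sigma_{(s,u)}$ for $(s,t),(t,u)\in\sim$; (4) for $G\in\mathcal{C}^i$ and $(i,j)\in\sim$, $\{\sigma_{(i,j)}(f)\mid f\in G\}\in\mathcal{C}$; (5) for $(i,j)\in\sim$ with $i\neq j$, $f\in\mathcal{F}_i$, $g\in\mathcal{F}_j$, we have $\{f,g\}\in\mathcal{X}$. For a concept $C$, $\varphi(C)=\bigcap\{\pi(d)\mid d\in C^{\mathcal{I}}\}$ ($=\mathcal{F}$ if $C^{\mathcal{I}}=\emptyset$). Concepts are interpreted as usual for $\top,\bot$, names, $\sqcap$, $\exists$, and $(N\bowtie N')^{\mathcal{I}}=\{d\mid\varphi(N)\cap\varphi(N')\subseteq\pi(d)\}$; every intra-domain role name $r$ must be interpreted as an intra-domain relation, i.e. there is $\kappa_r:2^{\mathcal{F}}\to2^{\mathcal{F}}$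 with $(\exists r.C)^{\mathcal{I}}=\{d\mid \kappa_r(\varphi(C))\subseteq\pi(d)\}$ for every concept $C$, such that: $\kappa_r(G)=\bigcup_{i=1}^k\kappa_r(G\cap\mathcal{F}_i)$ for $G\in\mathcal{C}$; $\kappa_r(G)\subseteq\mathcal{F}_i$ for $G\in\mathcal{C}^i$; $\kappa_r(\sigma_{(i,j)}(G))=\sigma_{(i,j)}(\kappa_r(G))$ for $(i,j)\in\sim$, $G\in\mathcal{C}^i$; $\kappa_r(G)\neq\emptyset$ for $G\in\mathcal{C}^i\setminus\{\emptyset\}$. Let $\delta(C)=\{i\mid \mathcal{F}_i\cap\varphi(C)\neq\emptyset\}$. For $U=\{(s_1,t_1),\dots,(s_l,t_l)\}\subseteq\sim$ with the $s_i$ pairwise distinct and the $t_i$ pairwise distinct, the domain translation $\sigma_U:\mathcal{F}\to\mathcal{F}$ is $\sigma_U(f)=\sigma_{(s_i,t_i)}(f)$ if $f\in\mathcal{F}_{s_i}$ and $\sigma_U(f)=f$ otherwise; $\mathrm{src}(U)=\{s_1,\dots,s_l\}$, $\mathrm{tgt}(U)=\{t_1,\dots,t_l\}$, and $\sigma_U(G)=\{\sigma_U(f)\mid f\in G\}$. $\mu(C,D)$ is the set of domain translations $\sigma_U$ with $\varphi(D)=\sigma_U(\varphi(C))$, $\mathrm{src}(U)\subseteq\delta(C)$, and $\mathrm{tgt}(U)\cap(\delta(C)\setminus\mathrm{src}(U))=\emptyset$. *)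

theory Defs
  imports Main
begin

text \<open>The natural conjunction coincides syntactically with the general conjunction.\<close>

datatype ('c, 'r) concept =
    Top
  | Bot
  | Name 'c
  | Conj "('c, 'r) concept" "('c, 'r) concept"
  | Exists 'r "('c, 'r) concept"
  | Bowtie "('c, 'r) concept" "('c, 'r) concept"

fun nat_concept :: "'c set \<Rightarrow> 'r set \<Rightarrow> ('c, 'r) concept \<Rightarrow> bool" where
  "nat_concept NC IR (Name A) = (A \<in> NC)"
| "nat_concept NC IR (Conj N N') = (nat_concept NC IR N \<and> nat_concept NC IR N')"
| "nat_concept NC IR (Bowtie N N') = (nat_concept NC IR N \<and> nat_concept NC IR N')"
| "nat_concept NC IR (Exists r N) = (r \<in> IR \<and> nat_concept NC IR N)"
| "nat_concept NC IR Top = False"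
| "nat_concept NC IR Bot = False"

fun wf_concept :: "'c set \<Rightarrow> 'r set \<Rightarrow> ('c, 'r) concept \<Rightarrow> bool" where
  "wf_concept NC IR Top = True"
| "wf_concept NC IR Bot = True"
| "wf_concept NC IR (Name A) = True"
| "wf_concept NC IR (Conj C D) = (wf_concept NC IR C \<and> wf_concept NC IR D)"
| "wf_concept NC IR (Exists r C) = wf_concept NC IR C"
| "wf_concept NC IR (Bowtie N N') = nat_concept NC IR (Bowtie N N')"

record ('d, 'c, 'r, 'f) dci =
  NC    :: "'c set"
  IR    :: "'r set"
  Delta :: "'d set"
  cI    :: "'c \<Rightarrow> 'd set"
  rI    :: "'r \<Rightarrow> ('d \<times> 'd) set"
  k     :: nat
  Fs    :: "nat \<Rightarrow> 'f set"
  X     :: "'f set set"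
  pi    :: "'d \<Rightarrow> 'f set"
  sim   :: "(nat \<times> nat) set"
  sigma :: "nat \<Rightarrow> nat \<Rightarrow> 'f \<Rightarrow> 'f"

definition feats :: "('d, 'c, 'r, 'f, 'z) dci_scheme \<Rightarrow> 'f set" where
  "feats I = (\<Union>i\<in>{1..k I}. Fs I i)"

definition Cset :: "('d, 'c, 'r, 'f, 'z) dci_scheme \<Rightarrow> 'f set set" where
  "Cset I = {G. G \<subseteq> feats I \<and> (\<forall>x\<in>X I. \<not> x \<subseteq> G)}"

definition Cset_i :: "('d, 'c, 'r, 'f, 'z) dci_scheme \<Rightarrow> nat \<Rightarrow> 'f set set" where
  "Cset_i I i = {G \<in> Cset I. G \<subseteq> Fs I i}"

fun ext :: "('d, 'c, 'r, 'f, 'z) dci_scheme \<Rightarrow> ('c, 'r) concept \<Rightarrow> 'd set"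
and phi :: "('d, 'c, 'r, 'f, 'z) dci_scheme \<Rightarrow> ('c, 'r) concept \<Rightarrow> 'f set" where
  "ext I Top = Delta I"
| "ext I Bot = {}"
| "ext I (Name A) = cI I A"
| "ext I (Conj C D) = ext I C \<inter> ext I D"
| "ext I (Exists r C) = {d \<in> Delta I. \<exists>e. (d, e) \<in> rI I r \<and> e \<in> ext I C}"
| "ext I (Bowtie N N') = {d \<in> Delta I. phi I N \<inter> phi I N' \<subseteq> pi I d}"
| "phi I C = feats I \<inter> (\<Inter>d\<in>ext I C. pi I d)"

definition intra_domain :: "('d, 'c, 'r, 'f, 'z) dci_scheme \<Rightarrow> 'r \<Rightarrow> bool" where
  "intra_domain I r \<longleftrightarrow> (\<exists>\<kappa> :: 'f set \<Rightarrow> 'f set.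
      (\<forall>C. wf_concept (NC I) (IR I) C \<longrightarrow>
           ext I (Exists r C) = {d \<in> Delta I. \<kappa> (phi I C) \<subseteq> pi I d})
    \<and> (\<forall>G\<in>Cset I. \<kappa> G = (\<Union>i\<in>{1..k I}. \<kappa> (G \<inter> Fs I i)))
    \<and> (\<forall>i\<in>{1..k I}. \<forall>G\<in>Cset_i I i. \<kappa> G \<subseteq> Fs I i)
    \<and> (\<forall>(i, j)\<in>sim I. \<forall>G\<in>Cset_i I i. \<kappa> (sigma I i j ` G) = sigma I i j ` \<kappa> G)
    \<and> (\<forall>i\<in>{1..k I}. \<forall>G\<in>Cset_i I i. G \<noteq> {} \<longrightarrow> \<kappa> G \<noteq> {}))"

definition is_dci :: "('d, 'c, 'r, 'f, 'z) dci_scheme \<Rightarrow> bool" where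
  "is_dci I \<longleftrightarrow>
     \<comment> \<open>distinguished infinite name sets\<close>
     infinite (NC I) \<and> infinite (IR I)
     \<comment> \<open>classical DL interpretation\<close>
   \<and> Delta I \<noteq> {}
   \<and> (\<forall>A. cI I A \<subseteq> Delta I) \<and> (\<forall>r. rI I r \<subseteq> Delta I \<times> Delta I)
     \<comment> \<open>[F_1,...,F_k] is a partition of a nonempty finite set F\<close>
   \<and> k I \<ge> 1 \<and> finite (feats I)
   \<and> (\<forall>i\<in>{1..k I}. Fs I i \<noteq> {})
   \<and> (\<forall>i\<in>{1..k I}. \<forall>j\<in>{1..k I}. i \<noteq> j \<longrightarrow> Fs I i \<inter> Fs I j = {})
     \<comment> \<open>X \<subseteq> 2^F with F \<in> X\<close>
   \<and> X I \<subseteq> Pow (feats I) \<and> feats I \<in> X I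
     \<comment> \<open>\<pi> : \<Delta> \<rightarrow> 2^F\<close>
   \<and> (\<forall>d\<in>Delta I. pi I d \<subseteq> feats I)
     \<comment> \<open>\<sim> equivalence relation on {1..k}, \<sigma>_(s,t) bijections F_s \<rightarrow> F_t\<close>
   \<and> equiv {1..k I} (sim I)
   \<and> (\<forall>(s, t)\<in>sim I. bij_betw (sigma I s t) (Fs I s) (Fs I t))
     \<comment> \<open>(1)\<close>
   \<and> (\<forall>d\<in>Delta I. \<forall>x\<in>X I. \<not> x \<subseteq> pi I d)
     \<comment> \<open>(2)\<close>
   \<and> (\<forall>G\<in>Cset I. \<exists>d\<in>Delta I. pi I d = G)
     \<comment> \<open>(3)\<close>
   \<and> (\<forall>(s, t)\<in>sim I. \<forall>g\<in>Fs I t. sigma I t s g = the_inv_into (Fs I s) (sigma I s t) g)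
   \<and> (\<forall>s t u. (s, t) \<in> sim I \<longrightarrow> (t, u) \<in> sim I \<longrightarrow>
        (\<forall>f\<in>Fs I s. sigma I t u (sigma I s t f) = sigma I s u f))
     \<comment> \<open>(4)\<close>
   \<and> (\<forall>(i, j)\<in>sim I. \<forall>G\<in>Cset_i I i. sigma I i j ` G \<in> Cset I)
     \<comment> \<open>(5)\<close>
   \<and> (\<forall>(i, j)\<in>sim I. i \<noteq> j \<longrightarrow> (\<forall>f\<in>Fs I i. \<forall>g\<in>Fs I j. {f, g} \<in> X I))
     \<comment> \<open>intra-domain role names are interpreted as intra-domain relations\<close>
   \<and> (\<forall>r\<in>IR I. intra_domain I r)"

definition delta :: "('d, 'c, 'r, 'f, 'z) dci_scheme \<Rightarrow> ('c, 'r) concept \<Rightarrow> nat set" where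
  "delta I C = {i \<in> {1..k I}. Fs I i \<inter> phi I C \<noteq> {}}"

definition src :: "(nat \<times> nat) set \<Rightarrow> nat set" where
  "src U = fst ` U"

definition tgt :: "(nat \<times> nat) set \<Rightarrow> nat set" where
  "tgt U = snd ` U"

definition trans_index :: "('d, 'c, 'r, 'f, 'z) dci_scheme \<Rightarrow> (nat \<times> nat) set \<Rightarrow> bool" where
  "trans_index I U \<longleftrightarrow> U \<subseteq> sim I \<and>
     (\<forall>(s, t)\<in>U. \<forall>(s', t')\<in>U. (s = s' \<longrightarrow> t = t') \<and> (t = t' \<longrightarrow> s = s'))"

definition dtrans :: "('d, 'c, 'r, 'f, 'z) dci_scheme \<Rightarrow> (nat \<times> nat) set \<Rightarrow> 'f \<Rightarrow> 'f" where
  "dtrans I U f =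
     (if \<exists>p\<in>U. f \<in> Fs I (fst p)
      then (let p = (SOME p. p \<in> U \<and> f \<in> Fs I (fst p)) in sigma I (fst p) (snd p) f)
      else f)"

definition mu_index :: "('d, 'c, 'r, 'f, 'z) dci_scheme \<Rightarrow> (nat \<times> nat) set
    \<Rightarrow> ('c, 'r) concept \<Rightarrow> ('c, 'r) concept \<Rightarrow> bool" where
  "mu_index I U C D \<longleftrightarrow> trans_index I U
     \<and> phi I D = dtrans I U ` phi I C
     \<and> src U \<subseteq> delta I C
     \<and> tgt U \<inter> (delta I C - src U) = {}"

definition mu :: "('d, 'c, 'r, 'f, 'z) dci_scheme \<Rightarrow> ('c, 'r) concept \<Rightarrow> ('c, 'r) concept
    \<Rightarrow> ('f \<Rightarrow> 'f) set" where
  "mu I C D = {dtrans I U | U. mu_index I U C D}"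

definition oplus :: "(nat \<times> nat) set \<Rightarrow> (nat \<times> nat) set \<Rightarrow> (nat \<times> nat) set" where
  "oplus U V =
     {(i, l) | i j l. (i, j) \<in> U \<and> (j, l) \<in> V \<and> i \<noteq> l}
   \<union> {(i, j) | i j. (i, j) \<in> U \<and> j \<notin> src V}
   \<union> {(j, l) | j l. (j, l) \<in> V \<and> j \<notin> tgt U}"

end

theory Submission
  imports Defs
begin

(* On the features of domain i, a domain translation sigma_U acts as sigma_(i,u i), where the
   index map u = domain_map U follows U where it is defined and is the identity elsewhere.
   The side conditions of mu(C,D) say precisely that u is injective on delta(C), and then
   delta(D) = u ` delta(C). Hence translations compose along their index maps: the index map
   of U (+) V is v o u on delta(C) and the identity elsewhere, which gives sigma_(U (+) V) in
   mu(C,E). Conversely, for sigma_W in mu(C,E) and sigma_U in mu(C,D), the graph of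
   w o u^-1 on delta(D) is a V in mu(D,E) with sigma_(U (+) V) = sigma_W. *)

section \<open>Index maps of partial injections\<close>

definition domain_map :: "(nat \<times> nat) set \<Rightarrow> nat \<Rightarrow> nat" where
  "domain_map U i = (if i \<in> src U then THE j. (i, j) \<in> U else i)"

lemma domain_map_eq:
  assumes "single_valued U" "(i, j) \<in> U"
  shows "domain_map U i = j"
proof -
  have "i \<in> src U" using assms(2) unfolding src_def by force
  then show ?thesis
    unfolding domain_map_def using assms by (auto intro: the_equality dest: single_valuedD)
qed

lemma domain_map_notin_src: "i \<notin> src U \<Longrightarrow> domain_map U i = i"
  unfolding domain_map_def by simp

lemma domain_map_in: "single_valued U \<Longrightarrow> i \<in> src U \<Longrightarrow> (i, domain_map U i) \<in> U"
  unfolding src_def by (auto simp: domain_map_eq)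

lemma domain_map_image_subset:
  "single_valued U \<Longrightarrow> domain_map U ` A \<subseteq> tgt U \<union> (A - src U)"
proof
  fix j assume "single_valued U" "j \<in> domain_map U ` A"
  then obtain i where "i \<in> A" "j = domain_map U i" by blast
  then show "j \<in> tgt U \<union> (A - src U)"
    using domain_map_in[OF \<open>single_valued U\<close>, of i]
    by (cases "i \<in> src U") (force simp: tgt_def domain_map_notin_src)+
qed

lemma inj_on_domain_map_iff:
  assumes "single_valued U" "single_valued (U\<inverse>)" "src U \<subseteq> A"
  shows "inj_on (domain_map U) A \<longleftrightarrow> tgt U \<inter> (A - src U) = {}"
proof
  assume inj: "inj_on (domain_map U) A"
  show "tgt U \<inter> (A - src U) = {}"
  proof (rule ccontr)
    assume "tgt U \<inter> (A - src U) \<noteq> {}"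
    then obtain i j where ij: "(i, j) \<in> U" "j \<in> A" "j \<notin> src U"
      unfolding tgt_def by auto
    then have "i \<in> A" "i \<noteq> j" using assms(3) unfolding src_def by force+
    moreover have "domain_map U i = domain_map U j"
      using ij by (simp add: domain_map_eq[OF assms(1)] domain_map_notin_src)
    ultimately show False using inj ij(2) by (auto dest: inj_onD)
  qed
next
  assume disj: "tgt U \<inter> (A - src U) = {}"
  show "inj_on (domain_map U) A"
  proof (rule inj_onI)
    fix i i' assume "i \<in> A" "i' \<in> A" and eq: "domain_map U i = domain_map U i'"
    have mapsto: "(i, domain_map U i) \<in> U" if "i \<in> src U" for i
      using domain_map_in[OF assms(1) that] .
    show "i = i'"
    proof (cases "i \<in> src U"; cases "i' \<in> src U")
      assume "i \<in> src U" "i' \<in> src U"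
      then show ?thesis using mapsto eq assms(2) by (metis converse_iff single_valuedD)
    next
      assume "i \<in> src U" "i' \<notin> src U"
      then show ?thesis using mapsto eq disj \<open>i' \<in> A\<close>
        by (force simp: tgt_def domain_map_notin_src)
    next
      assume "i \<notin> src U" "i' \<in> src U"
      then show ?thesis using mapsto eq disj \<open>i \<in> A\<close>
        by (force simp: tgt_def domain_map_notin_src)
    qed (use eq in \<open>simp add: domain_map_notin_src\<close>)
  qed
qed

lemma oplus_composeI: "(i, j) \<in> U \<Longrightarrow> (j, l) \<in> V \<Longrightarrow> i \<noteq> l \<Longrightarrow> (i, l) \<in> oplus U V"
  unfolding oplus_def by blast

lemma oplus_leftI: "(i, j) \<in> U \<Longrightarrow> j \<notin> src V \<Longrightarrow> (i, j) \<in> oplus U V"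
  unfolding oplus_def by blast

lemma oplus_rightI: "(j, l) \<in> V \<Longrightarrow> j \<notin> tgt U \<Longrightarrow> (j, l) \<in> oplus U V"
  unfolding oplus_def by blast

(* For A = delta(C) these are the conditions that mu(C,D) and mu(D,E) impose on U and V. *)
context
  fixes U V :: "(nat \<times> nat) set" and A :: "nat set"
  assumes sv_U: "single_valued U" and sv_V: "single_valued V"
    and src_U: "src U \<subseteq> A" and tgt_U: "tgt U \<inter> (A - src U) = {}"
    and src_V: "src V \<subseteq> domain_map U ` A"
begin

lemma oplus_memD:
  assumes "(i, l) \<in> oplus U V"
  shows "i \<in> A \<and> l = domain_map V (domain_map U i)"
  using assms unfolding oplus_def
proof (elim UnE CollectE exE conjE)
  fix i' j l' assume "(i, l) = (i', l')" "(i', j) \<in> U" "(j, l') \<in> V"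
  then show ?thesis using src_U by (force simp: src_def domain_map_eq sv_U sv_V)
next
  fix i' j assume "(i, l) = (i', j)" "(i', j) \<in> U" "j \<notin> src V"
  then show ?thesis using src_U by (force simp: src_def domain_map_eq sv_U domain_map_notin_src)
next
  fix j l' assume jl: "(i, l) = (j, l')" "(j, l') \<in> V" "j \<notin> tgt U"
  have "j \<in> domain_map U ` A" using jl(2) src_V unfolding src_def by force
  then have "j \<in> A - src U"
    using domain_map_image_subset[OF sv_U] jl(3) by blast
  then show ?thesis using jl by (simp add: domain_map_notin_src domain_map_eq sv_V)
qed

lemma oplus_memI:
  assumes "i \<in> A" "domain_map V (domain_map U i) \<noteq> i"
  shows "(i, domain_map V (domain_map U i)) \<in> oplus U V"
proof (cases "i \<in> src U")
  case True
  let ?j = "domain_map U i"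
  have ij: "(i, ?j) \<in> U" using domain_map_in[OF sv_U True] .
  show ?thesis
  proof (cases "?j \<in> src V")
    case True
    show ?thesis by (rule oplus_composeI[OF ij domain_map_in[OF sv_V True] assms(2)[symmetric]])
  next
    case False
    show ?thesis
      unfolding domain_map_notin_src[OF False] by (rule oplus_leftI[OF ij False])
  qed
next
  case False
  then have i: "i \<in> src V" "i \<notin> tgt U"
    using assms tgt_U by (auto simp: domain_map_notin_src)
  show ?thesis
    unfolding domain_map_notin_src[OF False] by (rule oplus_rightI[OF domain_map_in[OF sv_V i(1)] i(2)])
qed

lemma single_valued_oplus: "single_valued (oplus U V)"
proof (rule single_valuedI)
  fix i l l' assume "(i, l) \<in> oplus U V" "(i, l') \<in> oplus U V"
  then show "l = l'" using oplus_memD[of i l] oplus_memD[of i l'] by simp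
qed

lemma src_oplus_subset: "src (oplus U V) \<subseteq> A"
  unfolding src_def using oplus_memD by force

lemma domain_map_oplus:
  "domain_map (oplus U V) i = (if i \<in> A then domain_map V (domain_map U i) else i)"
proof (cases "i \<in> src (oplus U V)")
  case True
  then show ?thesis
    using domain_map_in[OF single_valued_oplus True] oplus_memD by auto
next
  case False
  have "domain_map V (domain_map U i) = i" if "i \<in> A"
  proof (rule ccontr)
    assume "domain_map V (domain_map U i) \<noteq> i"
    then have "(i, domain_map V (domain_map U i)) \<in> oplus U V" by (rule oplus_memI[OF that])
    with False show False unfolding src_def by force
  qed
  then show ?thesis using False by (simp add: domain_map_notin_src)
qed

end

definition index_graph :: "(nat \<Rightarrow> nat) \<Rightarrow> nat set \<Rightarrow> (nat \<times> nat) set" where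
  "index_graph h B = {(j, h j) | j. j \<in> B \<and> h j \<noteq> j}"

lemma single_valued_index_graph: "single_valued (index_graph h B)"
  unfolding index_graph_def by (auto intro: single_valuedI)

lemma single_valued_converse_index_graph:
  "inj_on h B \<Longrightarrow> single_valued ((index_graph h B)\<inverse>)"
  unfolding index_graph_def by (auto intro!: single_valuedI dest: inj_onD)

lemma src_index_graph_subset: "src (index_graph h B) \<subseteq> B"
  unfolding index_graph_def src_def by auto

lemma domain_map_index_graph:
  "domain_map (index_graph h B) j = (if j \<in> B then h j else j)"
proof (cases "j \<in> src (index_graph h B)")
  case True
  then show ?thesis unfolding src_def index_graph_def
    by (auto simp: domain_map_eq single_valued_index_graph[unfolded index_graph_def])
next
  case False
  have "h j = j" if "j \<in> B" using False that unfolding src_def index_graph_def by force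
  then show ?thesis using False by (simp add: domain_map_notin_src)
qed

section \<open>Domain translations\<close>

lemma trans_index_iff:
  "trans_index I U \<longleftrightarrow> U \<subseteq> sim I \<and> single_valued U \<and> single_valued (U\<inverse>)"
  unfolding trans_index_def single_valued_def by fast

lemma is_dciD:
  shows "is_dci I \<Longrightarrow> equiv {1..k I} (sim I)"
    and "is_dci I \<Longrightarrow> \<forall>i\<in>{1..k I}. \<forall>j\<in>{1..k I}. i \<noteq> j \<longrightarrow> Fs I i \<inter> Fs I j = {}"
    and "is_dci I \<Longrightarrow> \<forall>(s, t)\<in>sim I. bij_betw (sigma I s t) (Fs I s) (Fs I t)"
    and "is_dci I \<Longrightarrow> \<forall>s t u. (s, t) \<in> sim I \<longrightarrow> (t, u) \<in> sim I \<longrightarrow>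
          (\<forall>f\<in>Fs I s. sigma I t u (sigma I s t f) = sigma I s u f)"
  unfolding is_dci_def by (elim conjE; assumption)+

lemma dci_Fs_disjoint:
  "is_dci I \<Longrightarrow> i \<in> {1..k I} \<Longrightarrow> j \<in> {1..k I} \<Longrightarrow> f \<in> Fs I i \<Longrightarrow> f \<in> Fs I j \<Longrightarrow> i = j"
  using is_dciD(2) by blast

lemma dci_sigma_bij:
  "is_dci I \<Longrightarrow> (i, j) \<in> sim I \<Longrightarrow> bij_betw (sigma I i j) (Fs I i) (Fs I j)"
  using is_dciD(3) by blast

lemma dci_sigma_comp:
  "is_dci I \<Longrightarrow> (i, j) \<in> sim I \<Longrightarrow> (j, l) \<in> sim I \<Longrightarrow> f \<in> Fs I i
    \<Longrightarrow> sigma I j l (sigma I i j f) = sigma I i l f"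
  using is_dciD(4) by blast

lemma sim_in_range: "is_dci I \<Longrightarrow> (i, j) \<in> sim I \<Longrightarrow> i \<in> {1..k I} \<and> j \<in> {1..k I}"
  using is_dciD(1) unfolding equiv_def refl_on_def by blast

lemma sim_refl: "is_dci I \<Longrightarrow> i \<in> {1..k I} \<Longrightarrow> (i, i) \<in> sim I"
  using is_dciD(1) unfolding equiv_def refl_on_def by blast

lemma sim_sym: "is_dci I \<Longrightarrow> (i, j) \<in> sim I \<Longrightarrow> (j, i) \<in> sim I"
  using is_dciD(1) unfolding equiv_def sym_def by blast

lemma sim_trans: "is_dci I \<Longrightarrow> (i, j) \<in> sim I \<Longrightarrow> (j, l) \<in> sim I \<Longrightarrow> (i, l) \<in> sim I"
  using is_dciD(1) unfolding equiv_def trans_def by blast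

lemma sigma_in_Fs: "is_dci I \<Longrightarrow> (i, j) \<in> sim I \<Longrightarrow> f \<in> Fs I i \<Longrightarrow> sigma I i j f \<in> Fs I j"
  using dci_sigma_bij bij_betwE by blast

lemma sigma_self:
  assumes dci: "is_dci I" and "i \<in> {1..k I}" "f \<in> Fs I i"
  shows "sigma I i i f = f"
proof -
  have ii: "(i, i) \<in> sim I" using sim_refl assms by blast
  have "sigma I i i (sigma I i i f) = sigma I i i f" using dci_sigma_comp[OF dci ii ii] assms by blast
  then show ?thesis
    using bij_betw_imp_inj_on[OF dci_sigma_bij[OF dci ii]] sigma_in_Fs[OF dci ii] assms(3)
    by (blast dest: inj_onD)
qed

lemma sim_domain_map:
  "is_dci I \<Longrightarrow> trans_index I U \<Longrightarrow> i \<in> {1..k I} \<Longrightarrow> (i, domain_map U i) \<in> sim I"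
  by (cases "i \<in> src U") (auto simp: trans_index_iff domain_map_notin_src sim_refl dest: domain_map_in)

lemma dtrans_Fs:
  assumes dci: "is_dci I" and U: "trans_index I U" and i: "i \<in> {1..k I}" "f \<in> Fs I i"
  shows "dtrans I U f = sigma I i (domain_map U i) f"
proof -
  have sv: "single_valued U" using U unfolding trans_index_iff by blast
  have src_Fs: "f \<in> Fs I s \<longleftrightarrow> s = i" if "(s, t) \<in> U" for s t
  proof -
    have "s \<in> {1..k I}" using that U sim_in_range[OF dci] unfolding trans_index_iff by blast
    then show ?thesis using dci_Fs_disjoint[OF dci _ i(1) _ i(2)] i(2) by blast
  qed
  show ?thesis
  proof (cases "i \<in> src U")
    case True
    let ?p = "(i, domain_map U i)"
    have iU: "?p \<in> U" using domain_map_in[OF sv True] .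
    have "(SOME p. p \<in> U \<and> f \<in> Fs I (fst p)) = ?p"
    proof (rule some_equality)
      show "?p \<in> U \<and> f \<in> Fs I (fst ?p)" using iU i(2) by simp
    next
      fix p assume "p \<in> U \<and> f \<in> Fs I (fst p)"
      then show "p = ?p" using src_Fs domain_map_eq[OF sv] by (metis prod.collapse)
    qed
    moreover have "\<exists>p\<in>U. f \<in> Fs I (fst p)" using iU i(2) by force
    ultimately show ?thesis unfolding dtrans_def Let_def by simp
  next
    case False
    have "\<not> (\<exists>p\<in>U. f \<in> Fs I (fst p))" using False src_Fs unfolding src_def by force
    then show ?thesis
      unfolding dtrans_def using sigma_self[OF dci i] domain_map_notin_src[OF False] by simp
  qed
qed

lemma dtrans_not_feats:
  assumes dci: "is_dci I" and U: "trans_index I U" and f: "f \<notin> feats I"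
  shows "dtrans I U f = f"
proof -
  have "f \<notin> Fs I (fst p)" if "p \<in> U" for p
    using that U f sim_in_range[OF dci] unfolding trans_index_iff feats_def
    by (metis UN_I prod.collapse subsetD)
  then show ?thesis unfolding dtrans_def by auto
qed

lemma dtrans_cong:
  assumes dci: "is_dci I" and "trans_index I U" "trans_index I W"
    and "\<And>i. i \<in> {1..k I} \<Longrightarrow> domain_map U i = domain_map W i"
  shows "dtrans I U = dtrans I W"
proof
  fix f show "dtrans I U f = dtrans I W f"
  proof (cases "f \<in> feats I")
    case True
    then obtain i where "i \<in> {1..k I}" "f \<in> Fs I i" unfolding feats_def by blast
    then show ?thesis using assms by (simp add: dtrans_Fs)
  next
    case False
    then show ?thesis using assms by (simp add: dtrans_not_feats)
  qed
qed

lemma dtrans_dtrans: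
  assumes dci: "is_dci I" and U: "trans_index I U" and V: "trans_index I V"
    and i: "i \<in> {1..k I}" "f \<in> Fs I i"
  shows "dtrans I V (dtrans I U f) = sigma I i (domain_map V (domain_map U i)) f"
proof -
  let ?j = "domain_map U i"
  have ij: "(i, ?j) \<in> sim I" using sim_domain_map[OF dci U i(1)] .
  then have j: "?j \<in> {1..k I}" using sim_in_range[OF dci] by blast
  have jl: "(?j, domain_map V ?j) \<in> sim I" using sim_domain_map[OF dci V j] .
  show ?thesis
    using dtrans_Fs[OF dci U i] dtrans_Fs[OF dci V j sigma_in_Fs[OF dci ij i(2)]]
      dci_sigma_comp[OF dci ij jl i(2)] by simp
qed

section \<open>Composing domain translations in \<mu>\<close>

lemma delta_subset: "delta I C \<subseteq> {1..k I}"
  unfolding delta_def by blast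

lemma phi_in_Fs_delta:
  assumes "f \<in> phi I C"
  obtains i where "i \<in> delta I C" "f \<in> Fs I i"
proof -
  have "f \<in> feats I" using assms by simp
  then obtain i where "i \<in> {1..k I}" "f \<in> Fs I i" unfolding feats_def by blast
  moreover from this assms have "i \<in> delta I C" unfolding delta_def by blast
  ultimately show thesis by (intro that)
qed

lemma image_dtrans_comp:
  assumes dci: "is_dci I" and "trans_index I U" "trans_index I V" "trans_index I W"
    and comp: "\<And>i. i \<in> delta I C \<Longrightarrow> domain_map W i = domain_map V (domain_map U i)"
  shows "dtrans I W ` phi I C = dtrans I V ` dtrans I U ` phi I C"
  unfolding image_image
proof (rule image_cong[OF refl])
  fix f assume "f \<in> phi I C"
  then obtain i where i: "i \<in> delta I C" "f \<in> Fs I i" by (rule phi_in_Fs_delta)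
  then have "i \<in> {1..k I}" using delta_subset by blast
  then show "dtrans I W f = dtrans I V (dtrans I U f)"
    using dtrans_Fs[OF dci assms(4)] dtrans_dtrans[OF dci assms(2,3)] comp i by simp
qed

lemma mu_index_iff_inj_on:
  "mu_index I U C D \<longleftrightarrow> trans_index I U \<and> phi I D = dtrans I U ` phi I C
    \<and> src U \<subseteq> delta I C \<and> inj_on (domain_map U) (delta I C)"
  unfolding mu_index_def by (auto simp: trans_index_iff inj_on_domain_map_iff)

lemma delta_mu_index:
  assumes dci: "is_dci I" and U: "mu_index I U C D"
  shows "delta I D = domain_map U ` delta I C"
proof -
  have ti: "trans_index I U" and phi: "phi I D = dtrans I U ` phi I C"
    using U unfolding mu_index_def by auto
  have Fs_image: "dtrans I U f \<in> Fs I (domain_map U i)" "domain_map U i \<in> {1..k I}"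
    if "i \<in> delta I C" "f \<in> Fs I i" for i f
  proof -
    have i: "i \<in> {1..k I}" using that(1) delta_subset by blast
    have "(i, domain_map U i) \<in> sim I" using sim_domain_map[OF dci ti i] .
    then show "dtrans I U f \<in> Fs I (domain_map U i)" "domain_map U i \<in> {1..k I}"
      using dtrans_Fs[OF dci ti i that(2)] sigma_in_Fs[OF dci _ that(2)] sim_in_range[OF dci]
      by auto
  qed
  show ?thesis
  proof
    show "delta I D \<subseteq> domain_map U ` delta I C"
    proof
      fix j assume j: "j \<in> delta I D"
      then obtain g where g: "g \<in> Fs I j" "g \<in> phi I D" unfolding delta_def by blast
      then obtain f where f: "f \<in> phi I C" "g = dtrans I U f" using phi by blast
      obtain i where i: "i \<in> delta I C" "f \<in> Fs I i" using f(1) by (rule phi_in_Fs_delta)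
      have "j = domain_map U i"
        using dci_Fs_disjoint[OF dci _ _ g(1)] Fs_image[OF i] f(2) j delta_subset by blast
      then show "j \<in> domain_map U ` delta I C" using i(1) by blast
    qed
  next
    show "domain_map U ` delta I C \<subseteq> delta I D"
    proof
      fix j assume "j \<in> domain_map U ` delta I C"
      then obtain i where i: "i \<in> delta I C" "j = domain_map U i" by blast
      then obtain f where "f \<in> Fs I i" "f \<in> phi I C" unfolding delta_def by blast
      then show "j \<in> delta I D"
        using Fs_image i phi unfolding delta_def by blast
    qed
  qed
qed

lemma oplus_mu_index:
  assumes dci: "is_dci I" and U: "mu_index I U C D" and V: "mu_index I V D E"
  shows "(i, l) \<in> oplus U V \<Longrightarrow> i \<in> delta I C \<and> l = domain_map V (domain_map U i)"
    and "single_valued (oplus U V)"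
    and "src (oplus U V) \<subseteq> delta I C"
    and "domain_map (oplus U V) i = (if i \<in> delta I C then domain_map V (domain_map U i) else i)"
proof -
  have "single_valued U" "single_valued V" "src U \<subseteq> delta I C" "src V \<subseteq> delta I D"
    "tgt U \<inter> (delta I C - src U) = {}"
    using U V unfolding mu_index_def trans_index_iff by auto
  note oplus_facts = this(1-3) this(5) this(4)[unfolded delta_mu_index[OF dci U]]
  show "(i, l) \<in> oplus U V \<Longrightarrow> i \<in> delta I C \<and> l = domain_map V (domain_map U i)"
    by (rule oplus_memD[OF oplus_facts])
  show "single_valued (oplus U V)" by (rule single_valued_oplus[OF oplus_facts])
  show "src (oplus U V) \<subseteq> delta I C" by (rule src_oplus_subset[OF oplus_facts])
  show "domain_map (oplus U V) i = (if i \<in> delta I C then domain_map V (domain_map U i) else i)"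
    by (rule domain_map_oplus[OF oplus_facts])
qed

lemma mu_index_oplus:
  assumes dci: "is_dci I" and U: "mu_index I U C D" and V: "mu_index I V D E"
  shows "mu_index I (oplus U V) C E"
proof -
  let ?O = "oplus U V" and ?UV = "domain_map V \<circ> domain_map U"
  have tiU: "trans_index I U" and tiV: "trans_index I V"
    and phiD: "phi I D = dtrans I U ` phi I C" and phiE: "phi I E = dtrans I V ` phi I D"
    and injU: "inj_on (domain_map U) (delta I C)" and injV: "inj_on (domain_map V) (delta I D)"
    using U V unfolding mu_index_iff_inj_on by auto
  note memO = oplus_mu_index(1)[OF dci U V] and dmO = oplus_mu_index(4)[OF dci U V]
  have injUV: "inj_on ?UV (delta I C)"
    by (rule comp_inj_on[OF injU]) (use injV delta_mu_index[OF dci U] in simp)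
  have "inj_on (domain_map ?O) (delta I C) \<longleftrightarrow> inj_on ?UV (delta I C)"
    by (rule inj_on_cong) (simp add: dmO)
  with injUV have injO: "inj_on (domain_map ?O) (delta I C)" by simp
  have "single_valued (?O\<inverse>)"
  proof (rule single_valuedI)
    fix l i i' assume "(l, i) \<in> ?O\<inverse>" "(l, i') \<in> ?O\<inverse>"
    then have "i \<in> delta I C" "i' \<in> delta I C" "?UV i = ?UV i'" using memO by auto
    then show "i = i'" using inj_onD[OF injUV] by blast
  qed
  moreover have "?O \<subseteq> sim I"
  proof
    fix p assume "p \<in> ?O"
    then obtain i where i: "i \<in> delta I C" and p: "p = (i, ?UV i)"
      using memO by (cases p) auto
    have ij: "(i, domain_map U i) \<in> sim I"
      using i delta_subset sim_domain_map[OF dci tiU] by blast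
    then have "domain_map U i \<in> {1..k I}" using sim_in_range[OF dci] by blast
    then have "(domain_map U i, ?UV i) \<in> sim I" using sim_domain_map[OF dci tiV] by simp
    then show "p \<in> sim I" using p sim_trans[OF dci ij] by simp
  qed
  ultimately have tiO: "trans_index I ?O"
    using oplus_mu_index(2)[OF dci U V] unfolding trans_index_iff by blast
  have "phi I E = dtrans I ?O ` phi I C"
    unfolding phiE phiD by (rule image_dtrans_comp[OF dci tiU tiV tiO, symmetric]) (simp add: dmO)
  then show ?thesis
    unfolding mu_index_iff_inj_on using tiO oplus_mu_index(3)[OF dci U V] injO by blast
qed

lemma mu_index_index_graph:
  assumes dci: "is_dci I" and W: "mu_index I W C E" and U: "mu_index I U C D"
  defines "V \<equiv> index_graph (domain_map W \<circ> the_inv_into (delta I C) (domain_map U)) (delta I D)"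
  shows "mu_index I V D E"
    and "i \<in> delta I C \<Longrightarrow> domain_map V (domain_map U i) = domain_map W i"
proof -
  have tiU: "trans_index I U" and tiW: "trans_index I W"
    and phiD: "phi I D = dtrans I U ` phi I C" and phiE: "phi I E = dtrans I W ` phi I C"
    and injU: "inj_on (domain_map U) (delta I C)" and injW: "inj_on (domain_map W) (delta I C)"
    using U W unfolding mu_index_iff_inj_on by auto
  have deltaD: "delta I D = domain_map U ` delta I C" using delta_mu_index[OF dci U] .
  define h where "h = domain_map W \<circ> the_inv_into (delta I C) (domain_map U)"
  have V_graph: "V = index_graph h (delta I D)" unfolding V_def h_def ..
  have h: "h (domain_map U i) = domain_map W i" if "i \<in> delta I C" for i
    unfolding h_def using the_inv_into_f_f[OF injU that] by simp
  have dmV: "domain_map V (domain_map U i) = domain_map W i" if "i \<in> delta I C" for i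
  proof -
    have "domain_map U i \<in> delta I D" using that deltaD by blast
    then show ?thesis unfolding V_graph domain_map_index_graph using h[OF that] by simp
  qed
  then show "i \<in> delta I C \<Longrightarrow> domain_map V (domain_map U i) = domain_map W i" .
  have "inj_on (h \<circ> domain_map U) (delta I C) \<longleftrightarrow> inj_on (domain_map W) (delta I C)"
    by (rule inj_on_cong) (simp add: h)
  then have inj_h: "inj_on h (delta I D)"
    unfolding deltaD using injW by (blast intro: inj_on_imageI)
  have "V \<subseteq> sim I"
  proof
    fix p assume "p \<in> V"
    then obtain j where "j \<in> delta I D" and p: "p = (j, h j)"
      unfolding V_graph index_graph_def by blast
    then obtain i where i: "i \<in> delta I C" and j: "j = domain_map U i"
      unfolding deltaD by blast
    then have "i \<in> {1..k I}" using delta_subset by blast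
    then have "(domain_map U i, i) \<in> sim I" "(i, domain_map W i) \<in> sim I"
      using sim_domain_map[OF dci tiU] sim_domain_map[OF dci tiW] sim_sym[OF dci] by blast+
    then show "p \<in> sim I" unfolding p j h[OF i] by (rule sim_trans[OF dci])
  qed
  then have tiV: "trans_index I V"
    unfolding trans_index_iff V_graph
    using single_valued_index_graph single_valued_converse_index_graph[OF inj_h] by blast
  have "phi I E = dtrans I V ` phi I D"
    unfolding phiE phiD by (rule image_dtrans_comp[OF dci tiU tiV tiW]) (simp add: dmV)
  moreover have "inj_on (domain_map V) (delta I D) \<longleftrightarrow> inj_on h (delta I D)"
    by (rule inj_on_cong) (simp add: V_graph domain_map_index_graph)
  ultimately show "mu_index I V D E"
    unfolding mu_index_iff_inj_on using tiV inj_h src_index_graph_subset V_graph by blast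
qed

lemma mu_index_decompose:
  assumes dci: "is_dci I" and W: "mu_index I W C E" and U: "mu_index I U C D"
  obtains V where "mu_index I V D E" and "dtrans I W = dtrans I (oplus U V)"
proof -
  let ?V = "index_graph (domain_map W \<circ> the_inv_into (delta I C) (domain_map U)) (delta I D)"
  note V = mu_index_index_graph[OF dci W U]
  have tiW: "trans_index I W" and srcW: "src W \<subseteq> delta I C"
    using W unfolding mu_index_def by auto
  \<comment> \<open>\<open>oplus U V\<close> and \<open>W\<close> may differ by pairs \<open>(i, i)\<close>, so they are compared via index maps.\<close>
  have "dtrans I W = dtrans I (oplus U ?V)"
  proof (rule dtrans_cong[OF dci tiW])
    show "trans_index I (oplus U ?V)"
      using mu_index_oplus[OF dci U V(1)] unfolding mu_index_def by blast
    show "domain_map W i = domain_map (oplus U ?V) i" for i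
      unfolding oplus_mu_index(4)[OF dci U V(1)]
      using V(2) srcW domain_map_notin_src by auto
  qed
  with V(1) show thesis by (rule that)
qed

theorem proposition3:
  fixes I :: "('d, 'c, 'r, 'f) dci"
    and C D E :: "('c, 'r) concept"
  assumes "is_dci I"
    and "wf_concept (NC I) (IR I) C"
    and "wf_concept (NC I) (IR I) D"
    and "wf_concept (NC I) (IR I) E"
    and "mu I C D \<noteq> {}"
    and "mu I D E \<noteq> {}"
  shows "mu I C E = {dtrans I (oplus U V) | U V. mu_index I U C D \<and> mu_index I V D E}"
proof (intro set_eqI iffI)
  fix x assume "x \<in> mu I C E"
  then obtain W where x: "x = dtrans I W" and W: "mu_index I W C E" unfolding mu_def by blast
  obtain U where U: "mu_index I U C D" using assms(5) unfolding mu_def by blast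
  obtain V where "mu_index I V D E" "dtrans I W = dtrans I (oplus U V)"
    using mu_index_decompose[OF assms(1) W U] .
  then show "x \<in> {dtrans I (oplus U V) | U V. mu_index I U C D \<and> mu_index I V D E}"
    using U x by blast
next
  fix x assume "x \<in> {dtrans I (oplus U V) | U V. mu_index I U C D \<and> mu_index I V D E}"
  then obtain U V where "x = dtrans I (oplus U V)" "mu_index I U C D" "mu_index I V D E"
    by blast
  then show "x \<in> mu I C E" using mu_index_oplus[OF assms(1)] unfolding mu_def by blast
qed

end
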